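(* Let $H=(U,F)$ be a $d$-regular graph on $n$ vertices and let $k$ be an integer with $1 \le k \le d$. Let $G'$ be obtained from $H$ by subdividing every edge of $H$ once (replacing each edge $\{u,w\}$ by a new vertex $x_{uw}$ and edges $\{u,x_{uw}\},\{x_{uw},w\}$). Choose $\theta_i,\phi$ so that every original vertex $u\in U$ is accepting and every subdivision vertex is rejecting, and set $q=1$ and $p = d - (k-1)/2 + \varepsilon$ with $0<\varepsilon<1/n^2$. Then $H$ contains a clique on $k$ vertices if and only if there is a seed set $S$ in $G'$ with $|S| \le k$ and $\pi(S) > 0$.
   Context: Basic model on a finite undirected graph $G$: each agent $i$ has $\theta_i\in[0,1]$, the product has $\phi\in[0,1]$; agent $i$ is accepting if $\theta_i \le \phi$ and rejecting otherwise. A seed set is a set $S$ of accepting agents. $V(S)$ is the set of agents $i$ for which there exist $j \in S$ and a path in $G$ from $i$ to $j$ all of whose internal vertices are accepting (paths of length $0$ allowed). $V^+(S)$ and $V^-(S)$ are the accepting and rejecting agents in $V(S)$, and $\pi(S) = p\,|V^+(S)| - q\,|V^-(S)|$. *)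

theory Defs
  imports Complex_Main
begin

definition accepting :: "('v \<Rightarrow> real) \<Rightarrow> real \<Rightarrow> 'v \<Rightarrow> bool" where
  "accepting theta phi i \<longleftrightarrow> theta i \<le> phi"

definition seed_set :: "'v set \<Rightarrow> ('v \<Rightarrow> real) \<Rightarrow> real \<Rightarrow> 'v set \<Rightarrow> bool" where
  "seed_set Vs theta phi S \<longleftrightarrow> S \<subseteq> Vs \<and> (\<forall>j\<in>S. accepting theta phi j)"

definition is_path :: "'v set \<Rightarrow> ('v \<Rightarrow> 'v \<Rightarrow> bool) \<Rightarrow> 'v list \<Rightarrow> bool" where
  "is_path Vs Adj xs \<longleftrightarrow> xs \<noteq> [] \<and> distinct xs \<and> set xs \<subseteq> Vs \<and>
     (\<forall>k. Suc k < length xs \<longrightarrow> Adj (xs ! k) (xs ! Suc k))"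

text \<open>V(S): agents connected to some seed by a path whose internal vertices are accepting
  (paths of length 0 allowed).\<close>
definition reached :: "'v set \<Rightarrow> ('v \<Rightarrow> 'v \<Rightarrow> bool) \<Rightarrow> ('v \<Rightarrow> real) \<Rightarrow> real \<Rightarrow> 'v set \<Rightarrow> 'v set" where
  "reached Vs Adj theta phi S = {i \<in> Vs. \<exists>j\<in>S. \<exists>xs. is_path Vs Adj xs \<and> hd xs = i \<and> last xs = j \<and>
       (\<forall>v\<in>set (butlast (tl xs)). accepting theta phi v)}"

definition reached_pos where
  "reached_pos Vs Adj theta phi S = {i \<in> reached Vs Adj theta phi S. accepting theta phi i}"

definition reached_neg where
  "reached_neg Vs Adj theta phi S = {i \<in> reached Vs Adj theta phi S. \<not> accepting theta phi i}"

definition profit :: "'v set \<Rightarrow> ('v \<Rightarrow> 'v \<Rightarrow> bool) \<Rightarrow> ('v \<Rightarrow> real) \<Rightarrow> real \<Rightarrow> real \<Rightarrow> real \<Rightarrow> 'v set \<Rightarrow> real" where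
  "profit Vs Adj theta phi p q S =
     p * real (card (reached_pos Vs Adj theta phi S)) - q * real (card (reached_neg Vs Adj theta phi S))"

definition simple_graph :: "'a set \<Rightarrow> ('a \<Rightarrow> 'a \<Rightarrow> bool) \<Rightarrow> bool" where
  "simple_graph U E \<longleftrightarrow> finite U \<and> (\<forall>u w. E u w \<longrightarrow> u \<in> U \<and> w \<in> U \<and> E w u \<and> u \<noteq> w)"

definition regular :: "'a set \<Rightarrow> ('a \<Rightarrow> 'a \<Rightarrow> bool) \<Rightarrow> nat \<Rightarrow> bool" where
  "regular U E d \<longleftrightarrow> (\<forall>u\<in>U. card {w\<in>U. E u w} = d)"

definition has_clique :: "'a set \<Rightarrow> ('a \<Rightarrow> 'a \<Rightarrow> bool) \<Rightarrow> nat \<Rightarrow> bool" where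
  "has_clique U E k \<longleftrightarrow> (\<exists>C\<subseteq>U. card C = k \<and> (\<forall>u\<in>C. \<forall>w\<in>C. u \<noteq> w \<longrightarrow> E u w))"

text \<open>Subdivision G': original vertex u is Inl u; the subdivision vertex of edge {u,w}
  is Inr {u,w}.\<close>
definition subdiv_edges :: "('a \<Rightarrow> 'a \<Rightarrow> bool) \<Rightarrow> 'a set set" where
  "subdiv_edges E = {{u, w} | u w. E u w}"

definition subdiv_verts :: "'a set \<Rightarrow> ('a \<Rightarrow> 'a \<Rightarrow> bool) \<Rightarrow> ('a + 'a set) set" where
  "subdiv_verts U E = Inl ` U \<union> Inr ` subdiv_edges E"

fun subdiv_adj :: "('a \<Rightarrow> 'a \<Rightarrow> bool) \<Rightarrow> ('a + 'a set) \<Rightarrow> ('a + 'a set) \<Rightarrow> bool" where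
  "subdiv_adj E (Inl u) (Inr e) = (e \<in> subdiv_edges E \<and> u \<in> e)"
| "subdiv_adj E (Inr e) (Inl u) = (e \<in> subdiv_edges E \<and> u \<in> e)"
| "subdiv_adj E _ _ = False"

end

theory Submission imports Defs begin

text \<open>Seed sets of the subdivision consist of original vertices, since subdivision vertices
  reject. A seed set T \<subseteq> U reaches exactly T and the subdivision vertices of the edges
  incident to T, and the handshake identity counts those as d|T| minus the number of edges
  inside T. Hence 2\<pi>(T) = (2\<epsilon> - (k - 1))|T| + 2e(T). As 2e(T) \<le> |T|(|T| - 1), with equality
  exactly for cliques, and \<epsilon> is too small to make up for a missing vertex or a missing
  edge, \<pi>(T) > 0 with |T| \<le> k forces T to be a k-clique, while a k-clique has \<pi> = k\<epsilon>.\<close>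

definition incident_edges :: "('a \<Rightarrow> 'a \<Rightarrow> bool) \<Rightarrow> 'a set \<Rightarrow> 'a set set" where
  "incident_edges E T = {e \<in> subdiv_edges E. \<exists>u\<in>T. u \<in> e}"

definition inner_arcs :: "('a \<Rightarrow> 'a \<Rightarrow> bool) \<Rightarrow> 'a set \<Rightarrow> ('a \<times> 'a) set" where
  "inner_arcs E T = {(u, w). u \<in> T \<and> w \<in> T \<and> E u w}"

lemma finite_subdiv_edges:
  assumes "simple_graph U E" shows "finite (subdiv_edges E)"
proof -
  have "subdiv_edges E \<subseteq> Pow U" using assms unfolding subdiv_edges_def simple_graph_def by auto
  then show ?thesis using assms unfolding simple_graph_def by (meson finite_Pow_iff finite_subset)
qed

lemma regular_degree_le:
  assumes "simple_graph U E" "regular U E d" "u \<in> U"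
  shows "d \<le> card U - 1"
proof -
  have "d = card {w\<in>U. E u w}" using assms(2,3) unfolding regular_def by auto
  also have "\<dots> \<le> card (U - {u})"
    using assms(1) unfolding simple_graph_def by (intro card_mono) auto
  finally show ?thesis using assms(3) by simp
qed

lemma is_path_last_adj:
  assumes "is_path Vs Adj (ys @ [a, b])" shows "Adj a b"
  using assms unfolding is_path_def
  by (auto dest!: spec[of _ "length ys"] simp: nth_append)

lemma subdiv_path_to_original:
  assumes rej: "\<forall>e\<in>subdiv_edges E. \<not> accepting theta phi (Inr e)"
    and path: "is_path (subdiv_verts U E) (subdiv_adj E) xs"
    and last: "last xs = Inl j"
    and inner: "\<forall>v\<in>set (butlast (tl xs)). accepting theta phi v"
  shows "xs = [Inl j] \<or> (\<exists>e. xs = [Inr e, Inl j] \<and> e \<in> subdiv_edges E \<and> j \<in> e)"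
proof (cases "length xs \<ge> 2")
  case False
  moreover have "xs \<noteq> []" using path unfolding is_path_def by simp
  ultimately obtain a where "xs = [a]" by (cases xs) (auto simp: Suc_le_eq)
  then show ?thesis using last by simp
next
  case True
  then have "xs = butlast (butlast xs) @ [last (butlast xs), last xs]"
    by (cases xs rule: rev_cases; cases "butlast xs" rule: rev_cases) (auto simp: butlast_append)
  then obtain ys a where xs: "xs = ys @ [a, Inl j]" using last by metis
  have "subdiv_adj E a (Inl j)" using is_path_last_adj path xs by metis
  then obtain e where a: "a = Inr e" "e \<in> subdiv_edges E" "j \<in> e" by (cases a) auto
  have "ys = []"
  proof (rule ccontr)
    assume "ys \<noteq> []"
    then have "a \<in> set (butlast (tl xs))" using xs by (cases ys) (auto simp: butlast_append)
    then show False using inner rej a by auto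
  qed
  then show ?thesis using xs a by simp
qed

lemma reached_subdiv_original_seeds:
  assumes rej: "\<forall>e\<in>subdiv_edges E. \<not> accepting theta phi (Inr e)"
    and T: "T \<subseteq> U"
  shows "reached (subdiv_verts U E) (subdiv_adj E) theta phi (Inl ` T) =
    Inl ` T \<union> Inr ` incident_edges E T"
proof (intro set_eqI iffI)
  fix i assume "i \<in> reached (subdiv_verts U E) (subdiv_adj E) theta phi (Inl ` T)"
  then obtain j xs where "j \<in> T" "is_path (subdiv_verts U E) (subdiv_adj E) xs"
    "hd xs = i" "last xs = Inl j" "\<forall>v\<in>set (butlast (tl xs)). accepting theta phi v"
    unfolding reached_def by blast
  with subdiv_path_to_original[OF rej] show "i \<in> Inl ` T \<union> Inr ` incident_edges E T"
    unfolding incident_edges_def by fastforce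
next
  fix i assume "i \<in> Inl ` T \<union> Inr ` incident_edges E T"
  then consider j where "j \<in> T" "i = Inl j"
    | e j where "e \<in> subdiv_edges E" "j \<in> T" "j \<in> e" "i = Inr e"
    unfolding incident_edges_def by blast
  then show "i \<in> reached (subdiv_verts U E) (subdiv_adj E) theta phi (Inl ` T)"
  proof cases
    case (1 j)
    then have "is_path (subdiv_verts U E) (subdiv_adj E) [Inl j]"
      using T by (auto simp: is_path_def subdiv_verts_def)
    with 1 T show ?thesis unfolding reached_def
      by (auto simp: subdiv_verts_def intro!: bexI[of _ "Inl j"] exI[of _ "[Inl j]"])
  next
    case (2 e j)
    then have "is_path (subdiv_verts U E) (subdiv_adj E) [Inr e, Inl j]"
      using T by (auto simp: is_path_def subdiv_verts_def less_Suc_eq)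
    with 2 T show ?thesis unfolding reached_def
      by (auto simp: subdiv_verts_def intro!: bexI[of _ "Inl j"] exI[of _ "[Inr e, Inl j]"])
  qed
qed

lemma seed_set_subdiv_iff:
  assumes acc: "\<forall>u\<in>U. accepting theta phi (Inl u)"
    and rej: "\<forall>e\<in>subdiv_edges E. \<not> accepting theta phi (Inr e)"
  shows "seed_set (subdiv_verts U E) theta phi S \<longleftrightarrow> (\<exists>T\<subseteq>U. S = Inl ` T)"
proof
  assume S: "seed_set (subdiv_verts U E) theta phi S"
  then have "S \<subseteq> Inl ` U"
    using rej unfolding seed_set_def subdiv_verts_def by blast
  then show "\<exists>T\<subseteq>U. S = Inl ` T" by (auto simp: subset_image_iff)
next
  assume "\<exists>T\<subseteq>U. S = Inl ` T"
  then show "seed_set (subdiv_verts U E) theta phi S"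
    using acc unfolding seed_set_def subdiv_verts_def by auto
qed

lemma handshake_incident_edges:
  assumes G: "simple_graph U E" and T: "T \<subseteq> U"
  shows "2 * card (incident_edges E T) + card (inner_arcs E T) =
    2 * card {(u, w). u \<in> T \<and> E u w}"
proof -
  have fin: "finite U" and sym: "\<And>u w. E u w \<Longrightarrow> E w u" and irr: "\<And>u w. E u w \<Longrightarrow> u \<noteq> w"
    and inU: "\<And>u w. E u w \<Longrightarrow> u \<in> U \<and> w \<in> U" using G unfolding simple_graph_def by auto
  define I where "I = incident_edges E T"
  define arcs where "arcs e = {(u, w). u \<in> T \<and> E u w \<and> e = {u, w}}" for e
  have finI: "finite I" using finite_subdiv_edges[OF G] by (simp add: I_def incident_edges_def)
  have fin_arcs: "finite (arcs e)" for e
    by (rule finite_subset[of _ "U \<times> U"]) (use fin inU in \<open>auto simp: arcs_def\<close>)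
  have disj: "arcs e \<inter> arcs e' = {}" if "e \<noteq> e'" for e e'
    using that by (auto simp: arcs_def)
  have card_arcs: "card (arcs e) = (if e \<subseteq> T then 2 else 1)"
    and card_inner: "card (arcs e \<inter> T \<times> T) = (if e \<subseteq> T then 2 else 0)" if "e \<in> I" for e
  proof -
    obtain a b where e: "e = {a, b}" "E a b" "a \<in> T \<or> b \<in> T"
      using \<open>e \<in> I\<close> by (auto simp: I_def incident_edges_def subdiv_edges_def)
    have "arcs e = (if a \<in> T then {(a, b)} else {}) \<union> (if b \<in> T then {(b, a)} else {})"
      using e sym by (auto simp: arcs_def doubleton_eq_iff)
    then show "card (arcs e) = (if e \<subseteq> T then 2 else 1)"
      and "card (arcs e \<inter> T \<times> T) = (if e \<subseteq> T then 2 else 0)"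
      using e irr[OF e(2)] by auto
  qed
  have arcs_from: "{(u, w). u \<in> T \<and> E u w} = (\<Union>e\<in>I. arcs e)"
    by (auto simp: I_def incident_edges_def subdiv_edges_def arcs_def)
  have inner: "inner_arcs E T = (\<Union>e\<in>I. arcs e \<inter> T \<times> T)"
    by (auto simp: I_def incident_edges_def subdiv_edges_def arcs_def inner_arcs_def)
  have "card (inner_arcs E T) = (\<Sum>e\<in>I. card (arcs e \<inter> T \<times> T))"
    unfolding inner by (rule card_UN_disjoint) (use finI fin_arcs disj in auto)
  then have "2 * card I + card (inner_arcs E T) = (\<Sum>e\<in>I. 2 + card (arcs e \<inter> T \<times> T))"
    unfolding sum.distrib by simp
  also have "\<dots> = (\<Sum>e\<in>I. 2 * card (arcs e))"
    using card_arcs card_inner by (intro sum.cong) auto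
  also have "\<dots> = 2 * card {(u, w). u \<in> T \<and> E u w}"
    unfolding arcs_from by (subst card_UN_disjoint) (use finI fin_arcs disj in \<open>auto simp: sum_distrib_left\<close>)
  finally show ?thesis by (simp add: I_def)
qed

lemma card_arcs_from_regular:
  assumes G: "simple_graph U E" and reg: "regular U E d" and T: "T \<subseteq> U"
  shows "card {(u, w). u \<in> T \<and> E u w} = d * card T"
proof -
  have "{(u, w). u \<in> T \<and> E u w} = Sigma T (\<lambda>u. {w\<in>U. E u w})"
    using G unfolding simple_graph_def by auto
  moreover have "finite U" using G unfolding simple_graph_def by simp
  ultimately have "card {(u, w). u \<in> T \<and> E u w} = (\<Sum>u\<in>T. card {w\<in>U. E u w})"
    using T by (simp add: card_SigmaI finite_subset)
  also have "\<dots> = (\<Sum>u\<in>T. d)" using reg T unfolding regular_def by (intro sum.cong) auto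
  finally show ?thesis by simp
qed

lemma profit_subdiv_original_seeds:
  assumes G: "simple_graph U E" and reg: "regular U E d" and T: "T \<subseteq> U"
    and acc: "\<forall>u\<in>U. accepting theta phi (Inl u)"
    and rej: "\<forall>e\<in>subdiv_edges E. \<not> accepting theta phi (Inr e)"
  shows "2 * profit (subdiv_verts U E) (subdiv_adj E) theta phi p q (Inl ` T) =
    2 * (p - q * real d) * real (card T) + q * real (card (inner_arcs E T))"
proof -
  let ?R = "reached (subdiv_verts U E) (subdiv_adj E) theta phi (Inl ` T)"
  have R: "?R = Inl ` T \<union> Inr ` incident_edges E T"
    by (rule reached_subdiv_original_seeds[OF rej T])
  have rej': "\<forall>e\<in>incident_edges E T. \<not> accepting theta phi (Inr e)"
    using rej by (simp add: incident_edges_def)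
  have pos: "reached_pos (subdiv_verts U E) (subdiv_adj E) theta phi (Inl ` T) = Inl ` T"
    unfolding reached_pos_def R using acc T rej' by auto
  have neg: "reached_neg (subdiv_verts U E) (subdiv_adj E) theta phi (Inl ` T) =
      Inr ` incident_edges E T"
    unfolding reached_neg_def R using acc T rej' by auto
  have "2 * card (incident_edges E T) + card (inner_arcs E T) = 2 * d * card T"
    using handshake_incident_edges[OF G T] card_arcs_from_regular[OF G reg T] by simp
  then have "real (2 * card (incident_edges E T) + card (inner_arcs E T)) = real (2 * d * card T)"
    by (rule arg_cong)
  then have handshake: "2 * real (card (incident_edges E T)) =
      2 * real d * real (card T) - real (card (inner_arcs E T))"
    by (simp add: eq_diff_eq)
  have "2 * profit (subdiv_verts U E) (subdiv_adj E) theta phi p q (Inl ` T) =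
      2 * p * real (card T) - q * (2 * real (card (incident_edges E T)))"
    unfolding profit_def pos neg by (simp add: card_image right_diff_distrib)
  also have "\<dots> = 2 * (p - q * real d) * real (card T) + q * real (card (inner_arcs E T))"
    unfolding handshake by (simp add: algebra_simps)
  finally show ?thesis .
qed

lemma inner_arcs_subset_offdiag:
  assumes "irreflp E"
  shows "inner_arcs E T \<subseteq> Sigma T (\<lambda>u. T - {u})"
  using assms by (auto simp: inner_arcs_def irreflp_def)

lemma card_offdiag:
  assumes "finite T"
  shows "card (Sigma T (\<lambda>u. T - {u})) = card T * (card T - 1)"
  using assms by (simp add: card_SigmaI)

lemma card_inner_arcs_le:
  assumes "irreflp E" "finite T"
  shows "card (inner_arcs E T) \<le> card T * (card T - 1)"
  using card_mono[OF _ inner_arcs_subset_offdiag[OF assms(1), of T]] card_offdiag[OF assms(2)] assms(2)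
  by simp

lemma card_inner_arcs_eq_iff_clique:
  assumes "irreflp E" "finite T"
  shows "card (inner_arcs E T) = card T * (card T - 1) \<longleftrightarrow>
    (\<forall>u\<in>T. \<forall>w\<in>T. u \<noteq> w \<longrightarrow> E u w)"
proof -
  note card_offdiag[OF assms(2)]
  moreover have "finite (Sigma T (\<lambda>u. T - {u}))" using assms(2) by simp
  ultimately have "card (inner_arcs E T) = card T * (card T - 1) \<longleftrightarrow>
      inner_arcs E T = Sigma T (\<lambda>u. T - {u})"
    using inner_arcs_subset_offdiag[OF assms(1)] by (metis card_subset_eq)
  then show ?thesis using assms(1) by (auto simp: inner_arcs_def irreflp_def)
qed

lemma mult_lt_half_of_lt_inverse_square:
  fixes \<epsilon> :: real and k n :: nat
  assumes "k < n" "0 < \<epsilon>" "\<epsilon> < 1 / (real n)\<^sup>2"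
  shows "real k * \<epsilon> < 1 / 2"
proof -
  obtain m where n: "n = Suc m" and "k \<le> m" using assms(1) by (cases n) auto
  then have "2 * k < n\<^sup>2" by (simp add: power2_eq_square)
  then have "2 * real k < (real n)\<^sup>2" by (metis of_nat_less_iff of_nat_mult of_nat_numeral of_nat_power)
  moreover have "(real n)\<^sup>2 > 0" using n by simp
  ultimately have "2 * real k / (real n)\<^sup>2 < 1" by simp
  moreover have "real k * \<epsilon> \<le> real k * (1 / (real n)\<^sup>2)"
    using assms(3) by (intro mult_left_mono) auto
  ultimately show ?thesis by simp
qed

lemma profit_threshold:
  fixes \<epsilon> :: real and k t m :: nat
  assumes k: "1 \<le> k" and eps: "0 < \<epsilon>" "real k * \<epsilon> < 1 / 2"
    and t: "t \<le> k" and m: "m \<le> t * (t - 1)"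
  shows "(2 * \<epsilon> - (real k - 1)) * real t + real m > 0 \<longleftrightarrow> t = k \<and> m = k * (k - 1)"
proof
  assume pos: "(2 * \<epsilon> - (real k - 1)) * real t + real m > 0"
  have "real m \<le> real (t * (t - 1))" using m by (simp only: of_nat_le_iff)
  also have "\<dots> = real t * (real t - 1)" by (cases t) (simp_all add: algebra_simps)
  finally have m': "real m \<le> real t * (real t - 1)" .
  have "t = k"
  proof (rule ccontr)
    assume "t \<noteq> k"
    then have "real t \<le> real k - 1" using t by linarith
    then have "real m \<le> real t * (real k - 2)"
      using m' mult_left_mono[of "real t - 1" "real k - 2" "real t"] by simp
    moreover have "\<epsilon> \<le> real k * \<epsilon>" using k eps mult_right_mono[of 1 "real k" \<epsilon>] by simp
    then have "real t * (2 * \<epsilon> - 1) \<le> 0"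
      using eps(2) by (simp add: mult_nonneg_nonpos)
    ultimately show False using pos by (simp add: algebra_simps)
  qed
  moreover have "real (k * (k - 1)) < real (m + 1)"
    using pos eps(2) k \<open>t = k\<close> by (simp add: of_nat_diff algebra_simps)
  then have "k * (k - 1) < m + 1" by (simp only: of_nat_less_iff)
  ultimately show "t = k \<and> m = k * (k - 1)" using m by simp
next
  assume "t = k \<and> m = k * (k - 1)"
  then have "(2 * \<epsilon> - (real k - 1)) * real t + real m = 2 * \<epsilon> * real k"
    using k by (simp add: of_nat_diff algebra_simps)
  then show "(2 * \<epsilon> - (real k - 1)) * real t + real m > 0" using eps k by simp
qed

theorem mainTheorem9:
  fixes U :: "'a set" and E :: "'a \<Rightarrow> 'a \<Rightarrow> bool" and d k :: nat
    and theta :: "('a + 'a set) \<Rightarrow> real" and phi p q \<epsilon> :: real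
  assumes H: "simple_graph U E"
    and reg: "regular U E d"
    and k: "1 \<le> k" "k \<le> d"
    and theta01: "\<forall>i\<in>subdiv_verts U E. 0 \<le> theta i \<and> theta i \<le> 1"
    and phi01: "0 \<le> phi" "phi \<le> 1"
    and acc: "\<forall>u\<in>U. accepting theta phi (Inl u)"
    and rej: "\<forall>e\<in>subdiv_edges E. \<not> accepting theta phi (Inr e)"
    and q: "q = 1"
    and p: "p = real d - (real k - 1) / 2 + \<epsilon>"
    and eps: "0 < \<epsilon>" "\<epsilon> < 1 / (real (card U))^2"
  shows "has_clique U E k \<longleftrightarrow>
    (\<exists>S. seed_set (subdiv_verts U E) theta phi S \<and> card S \<le> k \<and>
         profit (subdiv_verts U E) (subdiv_adj E) theta phi p q S > 0)"
proof -
  have irrefl: "irreflp E" and fin: "finite U"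
    using H unfolding simple_graph_def irreflp_def by auto
  \<comment> \<open>for empty U the bound on \<epsilon> would read \<epsilon> < 1 / 0 = 0\<close>
  obtain u where "u \<in> U" using eps by fastforce
  then have "k < card U" using regular_degree_le[OF H reg] k by fastforce
  then have small: "real k * \<epsilon> < 1 / 2" using eps by (rule mult_lt_half_of_lt_inverse_square)
  have card_Inl: "card (Inl ` T :: ('a + 'a set) set) = card T" for T
    by (simp add: card_image)
  have threshold: "card T \<le> k \<and> profit (subdiv_verts U E) (subdiv_adj E) theta phi p q (Inl ` T) > 0
      \<longleftrightarrow> card T = k \<and> card (inner_arcs E T) = k * (k - 1)" if "T \<subseteq> U" for T
  proof -
    have "2 * (p - q * real d) = 2 * \<epsilon> - (real k - 1)" using p q by (simp add: field_simps)
    then have "2 * profit (subdiv_verts U E) (subdiv_adj E) theta phi p q (Inl ` T) =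
        (2 * \<epsilon> - (real k - 1)) * real (card T) + real (card (inner_arcs E T))"
      using profit_subdiv_original_seeds[OF H reg that acc rej, of p q] q by simp
    then have "profit (subdiv_verts U E) (subdiv_adj E) theta phi p q (Inl ` T) > 0 \<longleftrightarrow>
        (2 * \<epsilon> - (real k - 1)) * real (card T) + real (card (inner_arcs E T)) > 0"
      by linarith
    then show ?thesis
      using profit_threshold[OF k(1) eps(1) small] card_inner_arcs_le[OF irrefl]
        finite_subset[OF that fin] by auto
  qed
  have "(\<exists>S. seed_set (subdiv_verts U E) theta phi S \<and> card S \<le> k \<and>
         profit (subdiv_verts U E) (subdiv_adj E) theta phi p q S > 0) \<longleftrightarrow>
      (\<exists>T\<subseteq>U. card T \<le> k \<and> profit (subdiv_verts U E) (subdiv_adj E) theta phi p q (Inl ` T) > 0)"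
    unfolding seed_set_subdiv_iff[OF acc rej] by (metis card_Inl)
  also have "\<dots> \<longleftrightarrow> (\<exists>T\<subseteq>U. card T = k \<and> card (inner_arcs E T) = k * (k - 1))"
    using threshold by blast
  also have "\<dots> \<longleftrightarrow> has_clique U E k"
    using card_inner_arcs_eq_iff_clique[OF irrefl] finite_subset[OF _ fin]
    unfolding has_clique_def by metis
  finally show ?thesis by simp
qed

end
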